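(* Let $\mathfrak{X}=(X,\{R_i\}_{i=0}^{d+1})$ be a commutative association scheme with $d\ge 2$, $R_d^\top=R_{d+1}$ and $R_i^\top=R_i$ for $0\le i\le d-1$, whose symmetrization $\tilde{\mathfrak X}=(X,\{\tilde R_i\}_{i=0}^d)$ ($\tilde R_i=R_i$ for $i\le d-1$, $\tilde R_d=R_d\cup R_{d+1}$) is amorphic, with character table of the form: for primitive idempotents $\tilde E_0,\dots,\tilde E_d$ and $\tilde A_i$ the adjacency matrix of $\tilde R_i$ with valency $k_i$, $\tilde A_i\tilde E_0=k_i\tilde E_0$, $\tilde A_i\tilde E_i=b_i\tilde E_i$, $\tilde A_i\tilde E_j=a_i\tilde E_j$ for $1\le j\le d$, $j\ne i$, where $a_i\neq b_i$. Let $\Lambda$ be a nonempty subset of $\{1,2,\ldots,d+1\}$ and $R_\Lambda=\bigcup_{\alpha\in\Lambda}R_\alpha$. If the digraph $(X,R_{\Lambda})$ has $d+2$ distinct eigenvalues, then exactly one element of $\{d,d+1\}$ belongs to $\Lambda$.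
   Context: Association scheme: finite set $X$ with a partition of $X\times X$ into relations $R_0$ (diagonal), $R_1,\dots$, closed under transposition, with constant intersection numbers; commutative if these are symmetric in the lower indices. Adjacency matrices are the $01$-matrices of the relations; primitive idempotents $E_0=J/|X|,\dots$ of the Bose–Mesner algebra satisfy $A_iE_j\in\mathbb C E_j$. A symmetric scheme is amorphic if merging the nondiagonal relations along any partition of their index set into nonempty parts gives an association scheme. Eigenvalues of a digraph $(X,R)$ are those of its $01$ adjacency matrix. *)

theory Defs
  imports Complex_Main "Jordan_Normal_Form.Char_Poly"
begin

text \<open>The point set X is represented as {0..<n}; relations R 0, ..., R D (D = number of classes).\<close>

definition assoc_scheme :: "nat \<Rightarrow> (nat \<Rightarrow> (nat \<times> nat) set) \<Rightarrow> nat \<Rightarrow> bool" where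
  "assoc_scheme n R D \<longleftrightarrow>
     R 0 = {(x, x) | x. x < n} \<and>
     (\<forall>i\<le>D. R i \<noteq> {} \<and> R i \<subseteq> {..<n} \<times> {..<n}) \<and>
     (\<forall>i\<le>D. \<forall>j\<le>D. i \<noteq> j \<longrightarrow> R i \<inter> R j = {}) \<and>
     (\<Union>i\<le>D. R i) = {..<n} \<times> {..<n} \<and>
     (\<forall>i\<le>D. \<exists>j\<le>D. (R i)\<inverse> = R j) \<and>
     (\<forall>i\<le>D. \<forall>j\<le>D. \<forall>k\<le>D. \<exists>p. \<forall>(x, y)\<in>R k.
        card {z. z < n \<and> (x, z) \<in> R i \<and> (z, y) \<in> R j} = p)"

definition commutative_scheme :: "nat \<Rightarrow> (nat \<Rightarrow> (nat \<times> nat) set) \<Rightarrow> nat \<Rightarrow> bool" where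
  "commutative_scheme n R D \<longleftrightarrow> assoc_scheme n R D \<and>
     (\<forall>i\<le>D. \<forall>j\<le>D. \<forall>k\<le>D. \<forall>(x, y)\<in>R k.
        card {z. z < n \<and> (x, z) \<in> R i \<and> (z, y) \<in> R j} =
        card {z. z < n \<and> (x, z) \<in> R j \<and> (z, y) \<in> R i})"

definition symmetric_scheme :: "nat \<Rightarrow> (nat \<Rightarrow> (nat \<times> nat) set) \<Rightarrow> nat \<Rightarrow> bool" where
  "symmetric_scheme n R D \<longleftrightarrow> assoc_scheme n R D \<and> (\<forall>i\<le>D. (R i)\<inverse> = R i)"

text \<open>Merging of the nondiagonal relations along the partition of {1..D} into the
  nonempty fibres of a surjection f : {1..D} -> {1..m}.\<close>
definition merge_rel :: "(nat \<Rightarrow> (nat \<times> nat) set) \<Rightarrow> nat \<Rightarrow> (nat \<Rightarrow> nat) \<Rightarrow> nat \<Rightarrow> (nat \<times> nat) set" where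
  "merge_rel R D f j = (if j = 0 then R 0 else (\<Union>i\<in>{i. i \<in> {1..D} \<and> f i = j}. R i))"

definition amorphic :: "nat \<Rightarrow> (nat \<Rightarrow> (nat \<times> nat) set) \<Rightarrow> nat \<Rightarrow> bool" where
  "amorphic n R D \<longleftrightarrow> symmetric_scheme n R D \<and>
     (\<forall>m f. m \<ge> 1 \<and> f ` {1..D} = {1..m} \<longrightarrow> assoc_scheme n (merge_rel R D f) m)"

definition symmetrization :: "(nat \<Rightarrow> (nat \<times> nat) set) \<Rightarrow> nat \<Rightarrow> nat \<Rightarrow> (nat \<times> nat) set" where
  "symmetrization R d i = (if i = d then R d \<union> R (Suc d) else R i)"

definition adj_mat :: "nat \<Rightarrow> (nat \<times> nat) set \<Rightarrow> complex mat" where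
  "adj_mat n S = mat n n (\<lambda>(x, y). if (x, y) \<in> S then 1 else 0)"

definition valency :: "nat \<Rightarrow> (nat \<times> nat) set \<Rightarrow> nat" where
  "valency n S = card {y. y < n \<and> (0, y) \<in> S}"

text \<open>Membership in the Bose-Mesner algebra (span of the adjacency matrices):
  entries are constant on each relation.\<close>
definition in_bm_algebra :: "nat \<Rightarrow> (nat \<Rightarrow> (nat \<times> nat) set) \<Rightarrow> nat \<Rightarrow> complex mat \<Rightarrow> bool" where
  "in_bm_algebra n R D M \<longleftrightarrow> M \<in> carrier_mat n n \<and>
     (\<forall>i\<le>D. \<forall>(x, y)\<in>R i. \<forall>(u, v)\<in>R i. M $$ (x, y) = M $$ (u, v))"

definition primitive_idempotents :: "nat \<Rightarrow> (nat \<Rightarrow> (nat \<times> nat) set) \<Rightarrow> nat \<Rightarrow> (nat \<Rightarrow> complex mat) \<Rightarrow> bool" where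
  "primitive_idempotents n R D E \<longleftrightarrow>
     (\<forall>j\<le>D. in_bm_algebra n R D (E j) \<and> E j \<noteq> 0\<^sub>m n n \<and>
        (\<forall>l\<le>D. E j * E l = (if j = l then E j else 0\<^sub>m n n))) \<and>
     (\<forall>x<n. \<forall>y<n. (\<Sum>j\<le>D. E j $$ (x, y)) = (if x = y then 1 else 0)) \<and>
     E 0 = mat n n (\<lambda>_. 1 / of_nat n)"

end

theory Submission
  imports Defs
begin

text \<open>If both or neither of d, d+1 lie in Lambda, then R_Lambda is a union of classes
  of the symmetrized scheme. Its adjacency matrix A is then symmetric and, like every
  adjacency matrix of that scheme, acts as a scalar theta_j on each primitive
  idempotent E_j; by symmetry also E_j A = theta_j E_j. Since the E_j sum to the
  identity, some E_j does not kill a given eigenvector, which forces its eigenvalue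
  to be one of theta_0, ..., theta_d. So A has at most d+1 distinct eigenvalues.\<close>

lemma smult_vec_cancel:
  fixes w :: "'a :: idom vec"
  assumes "\<mu> \<cdot>\<^sub>v w = \<theta> \<cdot>\<^sub>v w" and "w \<noteq> 0\<^sub>v (dim_vec w)"
  shows "\<mu> = \<theta>"
proof -
  obtain i where i: "i < dim_vec w" "w $ i \<noteq> 0"
    using assms(2) by (auto simp: vec_eq_iff)
  have "\<mu> * w $ i = \<theta> * w $ i"
    using arg_cong[OF assms(1), of "\<lambda>u. u $ i"] i(1) by simp
  with i(2) show ?thesis by simp
qed

lemma sum_mult_mat_vec_resolution:
  fixes E :: "nat \<Rightarrow> 'a :: comm_ring_1 mat"
  assumes E: "\<forall>j\<le>d. E j \<in> carrier_mat n n"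
    and sum_E: "\<forall>x<n. \<forall>y<n. (\<Sum>j\<le>d. E j $$ (x, y)) = (if x = y then 1 else 0)"
    and v: "v \<in> carrier_vec n" and i: "i < n"
  shows "(\<Sum>k\<le>d. (E k *\<^sub>v v) $ i) = v $ i"
proof -
  have "(\<Sum>k\<le>d. (E k *\<^sub>v v) $ i) = (\<Sum>k\<le>d. \<Sum>z<n. E k $$ (i, z) * v $ z)"
    using E i v by (intro sum.cong) (auto simp: scalar_prod_def lessThan_atLeast0)
  also have "\<dots> = (\<Sum>z<n. (\<Sum>k\<le>d. E k $$ (i, z)) * v $ z)"
    by (subst sum.swap) (simp add: sum_distrib_right)
  also have "\<dots> = (\<Sum>z<n. if i = z then v $ z else 0)"
    using sum_E i by (intro sum.cong) auto
  finally show ?thesis using i by simp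
qed

lemma resolution_mult_mat_vec_nonzero:
  fixes E :: "nat \<Rightarrow> 'a :: comm_ring_1 mat"
  assumes E: "\<forall>j\<le>d. E j \<in> carrier_mat n n"
    and sum_E: "\<forall>x<n. \<forall>y<n. (\<Sum>j\<le>d. E j $$ (x, y)) = (if x = y then 1 else 0)"
    and v: "v \<in> carrier_vec n" "v \<noteq> 0\<^sub>v n"
  obtains k where "k \<le> d" "E k *\<^sub>v v \<noteq> 0\<^sub>v n"
proof (rule ccontr)
  assume "\<not> thesis"
  with that have "\<forall>k\<le>d. E k *\<^sub>v v = 0\<^sub>v n" by blast
  then have "v $ i = 0" if "i < n" for i
    using sum_mult_mat_vec_resolution[OF E sum_E v(1) that] that by simp
  then have "v = 0\<^sub>v n" using v(1) by (intro eq_vecI) auto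
  with v(2) show False ..
qed

lemma eigenvalue_mem_image_if_resolution:
  fixes A :: "'a :: field mat" and E :: "nat \<Rightarrow> 'a mat"
  assumes A: "A \<in> carrier_mat n n" and E: "\<forall>j\<le>d. E j \<in> carrier_mat n n"
    and sum_E: "\<forall>x<n. \<forall>y<n. (\<Sum>j\<le>d. E j $$ (x, y)) = (if x = y then 1 else 0)"
    and E_A: "\<forall>j\<le>d. E j * A = \<theta> j \<cdot>\<^sub>m E j"
    and "eigenvalue A \<mu>"
  shows "\<mu> \<in> \<theta> ` {..d}"
proof -
  from \<open>eigenvalue A \<mu>\<close> obtain v where v: "v \<in> carrier_vec n" "v \<noteq> 0\<^sub>v n" "A *\<^sub>v v = \<mu> \<cdot>\<^sub>v v"
    using A unfolding eigenvalue_def eigenvector_def by auto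
  obtain k where k: "k \<le> d" "E k *\<^sub>v v \<noteq> 0\<^sub>v n"
    using resolution_mult_mat_vec_nonzero[OF E sum_E v(1,2)] .
  have E_k: "E k \<in> carrier_mat n n" using E k(1) by blast
  have "\<mu> \<cdot>\<^sub>v (E k *\<^sub>v v) = E k *\<^sub>v (A *\<^sub>v v)"
    using E_k v by (simp add: mult_mat_vec)
  also have "\<dots> = (E k * A) *\<^sub>v v"
    using E_k A v(1) by simp
  also have "\<dots> = \<theta> k \<cdot>\<^sub>v (E k *\<^sub>v v)"
    using E_A k(1) E_k v(1) by auto
  finally have "\<mu> = \<theta> k"
    using k(2) E_k by (intro smult_vec_cancel) auto
  with k(1) show ?thesis by blast
qed

lemma card_eigenvalues_le_if_resolution:
  fixes A :: "'a :: field mat" and E :: "nat \<Rightarrow> 'a mat"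
  assumes "A \<in> carrier_mat n n" and "\<forall>j\<le>d. E j \<in> carrier_mat n n"
    and "\<forall>x<n. \<forall>y<n. (\<Sum>j\<le>d. E j $$ (x, y)) = (if x = y then 1 else 0)"
    and "\<forall>j\<le>d. E j * A = \<theta> j \<cdot>\<^sub>m E j"
  shows "card {\<mu>. eigenvalue A \<mu>} \<le> d + 1"
proof -
  have "card {\<mu>. eigenvalue A \<mu>} \<le> card (\<theta> ` {..d})"
    using eigenvalue_mem_image_if_resolution[OF assms] by (intro card_mono) auto
  also have "\<dots> \<le> d + 1"
    using card_image_le[of "{..d}" \<theta>] by simp
  finally show ?thesis .
qed

lemma mult_eq_smult_if_transpose_eq:
  fixes A E :: "'a :: comm_semiring_0 mat"
  assumes "A \<in> carrier_mat n n" "E \<in> carrier_mat n n"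
    and "transpose_mat A = A" "transpose_mat E = E"
    and "A * E = \<theta> \<cdot>\<^sub>m E"
  shows "E * A = \<theta> \<cdot>\<^sub>m E"
proof -
  have "E * A = transpose_mat (A * E)"
    using assms(1-4) by (simp add: transpose_mult)
  also have "\<dots> = \<theta> \<cdot>\<^sub>m transpose_mat E"
    using assms(5) by (intro eq_matI) auto
  finally show ?thesis
    using assms(4) by simp
qed

lemma adj_mat_carrier [simp]: "adj_mat n S \<in> carrier_mat n n"
  by (simp add: adj_mat_def)

lemma transpose_adj_mat: "transpose_mat (adj_mat n S) = adj_mat n (S\<inverse>)"
  by (intro eq_matI) (auto simp: adj_mat_def)

lemma adj_mat_empty: "adj_mat n {} = 0\<^sub>m n n"
  by (intro eq_matI) (auto simp: adj_mat_def)

lemma adj_mat_Un_disjoint: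
  assumes "S \<inter> U = {}"
  shows "adj_mat n (S \<union> U) = adj_mat n S + adj_mat n U"
  using assms by (intro eq_matI) (auto simp: adj_mat_def)

lemma adj_mat_UN_mult_eq_smult:
  assumes "finite T" and "\<forall>\<alpha>\<in>T. \<forall>\<beta>\<in>T. \<alpha> \<noteq> \<beta> \<longrightarrow> S \<alpha> \<inter> S \<beta> = {}"
    and E: "E \<in> carrier_mat n n"
    and "\<forall>\<alpha>\<in>T. adj_mat n (S \<alpha>) * E = c \<alpha> \<cdot>\<^sub>m E"
  shows "adj_mat n (\<Union>\<alpha>\<in>T. S \<alpha>) * E = (\<Sum>\<alpha>\<in>T. c \<alpha>) \<cdot>\<^sub>m E"
  using assms(1,2,4)
proof (induction T rule: finite_induct)
  case empty
  show ?case using E by (auto simp: adj_mat_empty intro!: eq_matI)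
next
  case (insert \<alpha> T)
  have "S \<alpha> \<inter> S \<beta> = {}" if "\<beta> \<in> T" for \<beta>
    using insert.prems(1) insert.hyps(2) that by (metis insertCI)
  then have "S \<alpha> \<inter> (\<Union>\<beta>\<in>T. S \<beta>) = {}"
    by blast
  then have "adj_mat n (\<Union>\<beta>\<in>insert \<alpha> T. S \<beta>) * E
      = adj_mat n (S \<alpha>) * E + adj_mat n (\<Union>\<beta>\<in>T. S \<beta>) * E"
    using E by (simp add: adj_mat_Un_disjoint add_mult_distrib_mat[of _ n n])
  also have "\<dots> = c \<alpha> \<cdot>\<^sub>m E + (\<Sum>\<beta>\<in>T. c \<beta>) \<cdot>\<^sub>m E"
    using insert.IH insert.prems by simp
  also have "\<dots> = (\<Sum>\<beta>\<in>insert \<alpha> T. c \<beta>) \<cdot>\<^sub>m E"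
    using insert.hyps E by (simp add: add_smult_distrib_right_mat)
  finally show ?case .
qed

lemma transpose_in_bm_algebra:
  assumes "symmetric_scheme n S d" and bm: "in_bm_algebra n S d M"
  shows "transpose_mat M = M"
proof -
  have scheme: "assoc_scheme n S d" and sym: "\<forall>i\<le>d. (S i)\<inverse> = S i"
    using assms(1) unfolding symmetric_scheme_def by blast+
  have cover: "(\<Union>i\<le>d. S i) = {..<n} \<times> {..<n}"
    using scheme unfolding assoc_scheme_def by (elim conjE) assumption
  have M: "M \<in> carrier_mat n n"
    using bm by (simp add: in_bm_algebra_def)
  have "M $$ (y, x) = M $$ (x, y)" if "x < n" "y < n" for x y
  proof -
    have "(x, y) \<in> (\<Union>i\<le>d. S i)"
      using cover that by simp
    then obtain i where i: "i \<le> d" "(x, y) \<in> S i"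
      by blast
    then have yx: "(y, x) \<in> S i"
      using sym by (metis converseI)
    have "\<forall>(x, y)\<in>S i. \<forall>(u, v)\<in>S i. M $$ (x, y) = M $$ (u, v)"
      using bm i(1) unfolding in_bm_algebra_def by blast
    then show ?thesis
      using i(2) yx by fast
  qed
  then show ?thesis
    using M by (intro eq_matI) auto
qed

lemma card_eigenvalues_union_of_classes_le:
  assumes scheme: "symmetric_scheme n S d" and PI: "primitive_idempotents n S d E"
    and common: "\<forall>\<alpha>\<in>{1..d}. \<forall>j\<le>d. \<exists>c. adj_mat n (S \<alpha>) * E j = c \<cdot>\<^sub>m E j"
    and T: "T \<subseteq> {1..d}"
  shows "card {\<mu>. eigenvalue (adj_mat n (\<Union>\<alpha>\<in>T. S \<alpha>)) \<mu>} \<le> d + 1"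
proof -
  obtain c where c: "\<forall>\<alpha>\<in>{1..d}. \<forall>j\<le>d. adj_mat n (S \<alpha>) * E j = c \<alpha> j \<cdot>\<^sub>m E j"
    using common by metis
  define A where "A = adj_mat n (\<Union>\<alpha>\<in>T. S \<alpha>)"
  have sym: "\<forall>i\<le>d. (S i)\<inverse> = S i"
    using scheme unfolding symmetric_scheme_def by blast
  have disj: "\<forall>i\<le>d. \<forall>j\<le>d. i \<noteq> j \<longrightarrow> S i \<inter> S j = {}"
    using scheme unfolding symmetric_scheme_def assoc_scheme_def by (elim conjE) assumption
  have bm: "\<forall>j\<le>d. in_bm_algebra n S d (E j)"
    and sum_E: "\<forall>x<n. \<forall>y<n. (\<Sum>j\<le>d. E j $$ (x, y)) = (if x = y then 1 else 0)"
    using PI by (simp_all add: primitive_idempotents_def)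
  then have E: "\<forall>j\<le>d. E j \<in> carrier_mat n n"
    by (simp add: in_bm_algebra_def)
  have "(S \<alpha>)\<inverse> = S \<alpha>" if "\<alpha> \<in> T" for \<alpha>
    using sym T that by (meson atLeastAtMost_iff subsetD)
  then have "(\<Union>\<alpha>\<in>T. S \<alpha>)\<inverse> = (\<Union>\<alpha>\<in>T. S \<alpha>)"
    by (simp add: converse_UNION)
  then have A_sym: "transpose_mat A = A"
    unfolding A_def transpose_adj_mat by simp
  have "A * E j = (\<Sum>\<alpha>\<in>T. c \<alpha> j) \<cdot>\<^sub>m E j" if "j \<le> d" for j
    unfolding A_def
  proof (rule adj_mat_UN_mult_eq_smult)
    show "finite T" using T finite_subset by blast
    show "\<forall>\<alpha>\<in>T. \<forall>\<beta>\<in>T. \<alpha> \<noteq> \<beta> \<longrightarrow> S \<alpha> \<inter> S \<beta> = {}"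
      using disj T by (meson atLeastAtMost_iff subsetD)
    show "E j \<in> carrier_mat n n" using E that by blast
    show "\<forall>\<alpha>\<in>T. adj_mat n (S \<alpha>) * E j = c \<alpha> j \<cdot>\<^sub>m E j"
      using c T that by blast
  qed
  then have "\<forall>j\<le>d. E j * A = (\<Sum>\<alpha>\<in>T. c \<alpha> j) \<cdot>\<^sub>m E j"
    using E bm scheme A_sym unfolding A_def
    by (auto intro!: mult_eq_smult_if_transpose_eq transpose_in_bm_algebra)
  then show ?thesis
    unfolding A_def by (intro card_eigenvalues_le_if_resolution[OF _ E sum_E]) simp
qed

lemma UN_eq_UN_symmetrization:
  assumes "d \<in> \<Lambda> \<longleftrightarrow> Suc d \<in> \<Lambda>"
  shows "(\<Union>\<alpha>\<in>\<Lambda>. R \<alpha>) = (\<Union>\<alpha>\<in>\<Lambda> - {Suc d}. symmetrization R d \<alpha>)"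
  using assms unfolding symmetrization_def by (auto split: if_splits)

theorem lemma3p3:
  fixes n d :: nat and R :: "nat \<Rightarrow> (nat \<times> nat) set" and \<Lambda> :: "nat set"
  assumes "commutative_scheme n R (d + 1)"
    and "d \<ge> 2"
    and "(R d)\<inverse> = R (d + 1)"
    and "\<forall>i<d. (R i)\<inverse> = R i"
    and "amorphic n (symmetrization R d) d"
    and "\<exists>E a b :: nat \<Rightarrow> complex.
           primitive_idempotents n (symmetrization R d) d E \<and>
           (\<forall>i\<in>{1..d}.
              adj_mat n (symmetrization R d i) * E 0
                = of_nat (valency n (symmetrization R d i)) \<cdot>\<^sub>m E 0 \<and>
              adj_mat n (symmetrization R d i) * E i = b i \<cdot>\<^sub>m E i \<and>
              (\<forall>j\<in>{1..d}. j \<noteq> i \<longrightarrow> adj_mat n (symmetrization R d i) * E j = a i \<cdot>\<^sub>m E j) \<and>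
              a i \<noteq> b i)"
    and "\<Lambda> \<noteq> {}"
    and "\<Lambda> \<subseteq> {1..d + 1}"
    and "card {\<mu>. eigenvalue (adj_mat n (\<Union>\<alpha>\<in>\<Lambda>. R \<alpha>)) \<mu>} = d + 2"
  shows "(d \<in> \<Lambda>) \<noteq> (d + 1 \<in> \<Lambda>)"
proof
  assume same: "(d \<in> \<Lambda>) = (d + 1 \<in> \<Lambda>)"
  let ?S = "symmetrization R d"
  obtain E a b where PI: "primitive_idempotents n ?S d E" and eig: "\<forall>i\<in>{1..d}.
      adj_mat n (?S i) * E 0 = of_nat (valency n (?S i)) \<cdot>\<^sub>m E 0 \<and>
      adj_mat n (?S i) * E i = b i \<cdot>\<^sub>m E i \<and>
      (\<forall>j\<in>{1..d}. j \<noteq> i \<longrightarrow> adj_mat n (?S i) * E j = a i \<cdot>\<^sub>m E j)"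
    using assms(6) by blast
  have "\<forall>\<alpha>\<in>{1..d}. \<forall>j\<le>d. \<exists>c. adj_mat n (?S \<alpha>) * E j = c \<cdot>\<^sub>m E j"
  proof (intro ballI allI impI)
    fix \<alpha> j assume \<alpha>: "\<alpha> \<in> {1..d}" and "j \<le> d"
    then consider "j = 0" | "j = \<alpha>" | "j \<in> {1..d}" "j \<noteq> \<alpha>" by fastforce
    then show "\<exists>c. adj_mat n (?S \<alpha>) * E j = c \<cdot>\<^sub>m E j"
      using eig \<alpha> by cases blast+
  qed
  moreover have "symmetric_scheme n ?S d"
    using assms(5) by (simp add: amorphic_def)
  ultimately have "card {\<mu>. eigenvalue (adj_mat n (\<Union>\<alpha>\<in>\<Lambda> - {Suc d}. ?S \<alpha>)) \<mu>} \<le> d + 1"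
    using PI assms(8) by (intro card_eigenvalues_union_of_classes_le) auto
  then show False
    using assms(9) same UN_eq_UN_symmetrization[of d \<Lambda> R] by simp
qed

end
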